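(* Let $X$ be an FK-space containing $\phi$ and let $(Y^n)_{n\ge1}$ be FK-spaces such that each $Y^n$ is deferred Ces\`{a}ro conull with respect to $X$. Then $\bigcap_n Y^n$ (with its intersection FK-topology) is deferred Ces\`{a}ro conull with respect to $X$.
   Context: An FK-space is a vector subspace of the space $w$ of all complex sequences with a complete metrizable locally convex topology in which all coordinate functionals are continuous; $X'$ is the continuous dual. The intersection $\bigcap_n Y^n$ of FK-spaces is an FK-space with the topology generated by all seminorms of all $Y^n$ (paranorm $\sum_n \rho_n/(2^n(1+\rho_n))$). $\delta^j$ is the sequence with $1$ in position $j$, $0$ elsewhere; $\phi=\operatorname{span}\{\delta^j\}$. Fix nonnegative integer sequences $p(n)<q(n)$ with $q(n)\to\infty$. For $x\in w$ let $x^{(k)}=\sum_{j=1}^k x_j\delta^j$ and $T_n(x)=\frac{1}{q(n)-p(n)}\sum_{k=p(n)+1}^{q(n)}x^{(k)}$. For an FK-space $X\supseteq\phi$: $D_p^qW(X)=\{x\in X : f(T_n(x))\to f(x)\ \forall f\in X'\}$; $D_p^qB(X)=\{x\in X : \sup_n|f(T_n(x))|<\infty\ \forall f\in X'\}$. For FK-spaces $X\subseteq Y$ with $D_p^qW(X)\neq D_p^qB(X)$, $Y$ is called deferred Ces\`{a}ro conull with respect to $X$ if $D_p^qB(X)\subseteq D_p^qW(Y)$. *)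

theory Defs
  imports "HOL-Analysis.Analysis" "HOL-Library.Nat_Bijection"
begin

text \<open>Sequences in w are functions nat => complex (coordinates indexed from 0).
  A locally convex metrizable topology on a subspace X of w is given by a countable
  family of seminorms rho :: nat => (nat => complex) => real on X.\<close>

definition seq_add :: "(nat \<Rightarrow> complex) \<Rightarrow> (nat \<Rightarrow> complex) \<Rightarrow> nat \<Rightarrow> complex"
  where "seq_add x y = (\<lambda>j. x j + y j)"

definition seq_diff :: "(nat \<Rightarrow> complex) \<Rightarrow> (nat \<Rightarrow> complex) \<Rightarrow> nat \<Rightarrow> complex"
  where "seq_diff x y = (\<lambda>j. x j - y j)"

definition seq_scale :: "complex \<Rightarrow> (nat \<Rightarrow> complex) \<Rightarrow> nat \<Rightarrow> complex"
  where "seq_scale c x = (\<lambda>j. c * x j)"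

definition is_subspace_w :: "(nat \<Rightarrow> complex) set \<Rightarrow> bool" where
  "is_subspace_w X \<longleftrightarrow> (\<lambda>j. 0) \<in> X \<and> (\<forall>x\<in>X. \<forall>y\<in>X. seq_add x y \<in> X)
      \<and> (\<forall>c. \<forall>x\<in>X. seq_scale c x \<in> X)"

definition is_seminorm_on :: "(nat \<Rightarrow> complex) set \<Rightarrow> ((nat \<Rightarrow> complex) \<Rightarrow> real) \<Rightarrow> bool" where
  "is_seminorm_on X r \<longleftrightarrow> (\<forall>x\<in>X. 0 \<le> r x)
      \<and> (\<forall>x\<in>X. \<forall>y\<in>X. r (seq_add x y) \<le> r x + r y)
      \<and> (\<forall>c. \<forall>x\<in>X. r (seq_scale c x) = cmod c * r x)"

definition FK_top :: "(nat \<Rightarrow> complex) set \<Rightarrow> (nat \<Rightarrow> (nat \<Rightarrow> complex) \<Rightarrow> real)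
    \<Rightarrow> (nat \<Rightarrow> complex) topology" where
  "FK_top X \<rho> = topology_generated_by
     {{y \<in> X. \<rho> k (seq_diff y x) < e} | k x e. x \<in> X \<and> e > 0}"

definition is_FK :: "(nat \<Rightarrow> complex) set \<Rightarrow> (nat \<Rightarrow> (nat \<Rightarrow> complex) \<Rightarrow> real) \<Rightarrow> bool" where
  "is_FK X \<rho> \<longleftrightarrow> is_subspace_w X
     \<and> (\<forall>k. is_seminorm_on X (\<rho> k))
     \<and> (\<forall>x\<in>X. (\<forall>k. \<rho> k x = 0) \<longrightarrow> x = (\<lambda>j. 0))
     \<and> (\<forall>s. (\<forall>n. s n \<in> X) \<and> (\<forall>k. \<forall>e>0. \<exists>N. \<forall>m\<ge>N. \<forall>n\<ge>N. \<rho> k (seq_diff (s m) (s n)) < e)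
            \<longrightarrow> (\<exists>x\<in>X. \<forall>k. (\<lambda>n. \<rho> k (seq_diff (s n) x)) \<longlonglongrightarrow> 0))
     \<and> (\<forall>j. continuous_map (FK_top X \<rho>) euclidean (\<lambda>x. x j))"

definition FK_dual :: "(nat \<Rightarrow> complex) set \<Rightarrow> (nat \<Rightarrow> (nat \<Rightarrow> complex) \<Rightarrow> real)
    \<Rightarrow> ((nat \<Rightarrow> complex) \<Rightarrow> complex) set" where
  "FK_dual X \<rho> = {f. (\<forall>x\<in>X. \<forall>y\<in>X. f (seq_add x y) = f x + f y)
      \<and> (\<forall>c. \<forall>x\<in>X. f (seq_scale c x) = c * f x)
      \<and> continuous_map (FK_top X \<rho>) euclidean f}"

definition delta :: "nat \<Rightarrow> nat \<Rightarrow> complex" where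
  "delta j = (\<lambda>i. if i = j then 1 else 0)"

text \<open>phi = span of the unit sequences = finitely supported sequences.\<close>
definition phi :: "(nat \<Rightarrow> complex) set" where
  "phi = {x. finite {j. x j \<noteq> 0}}"

text \<open>k-th section x^(k): keeps the first k coordinates (0-based: indices j < k).\<close>
definition sect :: "(nat \<Rightarrow> complex) \<Rightarrow> nat \<Rightarrow> nat \<Rightarrow> complex" where
  "sect x k = (\<lambda>j. if j < k then x j else 0)"

definition Tdc :: "(nat \<Rightarrow> nat) \<Rightarrow> (nat \<Rightarrow> nat) \<Rightarrow> nat \<Rightarrow> (nat \<Rightarrow> complex) \<Rightarrow> nat \<Rightarrow> complex" where
  "Tdc p q n x = (\<lambda>j. (1 / of_nat (q n - p n)) * (\<Sum>k\<in>{p n<..q n}. sect x k j))"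

definition DW :: "(nat \<Rightarrow> nat) \<Rightarrow> (nat \<Rightarrow> nat) \<Rightarrow> (nat \<Rightarrow> complex) set
    \<Rightarrow> (nat \<Rightarrow> (nat \<Rightarrow> complex) \<Rightarrow> real) \<Rightarrow> (nat \<Rightarrow> complex) set" where
  "DW p q X \<rho> = {x \<in> X. \<forall>f \<in> FK_dual X \<rho>. (\<lambda>n. f (Tdc p q n x)) \<longlonglongrightarrow> f x}"

definition DB :: "(nat \<Rightarrow> nat) \<Rightarrow> (nat \<Rightarrow> nat) \<Rightarrow> (nat \<Rightarrow> complex) set
    \<Rightarrow> (nat \<Rightarrow> (nat \<Rightarrow> complex) \<Rightarrow> real) \<Rightarrow> (nat \<Rightarrow> complex) set" where
  "DB p q X \<rho> = {x \<in> X. \<forall>f \<in> FK_dual X \<rho>. Bseq (\<lambda>n. f (Tdc p q n x))}"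

definition dc_conull :: "(nat \<Rightarrow> nat) \<Rightarrow> (nat \<Rightarrow> nat) \<Rightarrow> (nat \<Rightarrow> complex) set
    \<Rightarrow> (nat \<Rightarrow> (nat \<Rightarrow> complex) \<Rightarrow> real) \<Rightarrow> (nat \<Rightarrow> complex) set
    \<Rightarrow> (nat \<Rightarrow> (nat \<Rightarrow> complex) \<Rightarrow> real) \<Rightarrow> bool" where
  "dc_conull p q X \<rho>X Y \<rho>Y \<longleftrightarrow> is_FK X \<rho>X \<and> is_FK Y \<rho>Y \<and> X \<subseteq> Y
     \<and> DW p q X \<rho>X \<noteq> DB p q X \<rho>X \<and> DB p q X \<rho>X \<subseteq> DW p q Y \<rho>Y"

text \<open>Seminorm family of the intersection: all seminorms of all Y^n, enumerated via prod_decode.\<close>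
definition inter_seminorms :: "(nat \<Rightarrow> nat \<Rightarrow> (nat \<Rightarrow> complex) \<Rightarrow> real)
    \<Rightarrow> nat \<Rightarrow> (nat \<Rightarrow> complex) \<Rightarrow> real" where
  "inter_seminorms \<rho>s m = \<rho>s (fst (prod_decode m)) (snd (prod_decode m))"

end

theory Submission
  imports Defs "HOL-Library.Function_Algebras"
begin

(* A continuous linear functional f on the intersection Z of the Y^n is bounded by a finite sum
   of seminorms of finitely many of the Y^n. Embedding Z diagonally into the product of the Y^n
   and extending f there by the Hahn-Banach theorem writes f on Z as a finite sum of continuous
   linear functionals g_n on the Y^n. For x in DB(X) every g_n(T_k x) tends to g_n(x), because
   Y^n is deferred Cesaro conull with respect to X, and hence so does f(T_k x). That Z is again
   an FK-space is checked directly; a Cauchy sequence in Z has a limit in each Y^n, and these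
   limits coincide because coordinates are continuous. *)

section \<open>The Hahn-Banach theorem\<close>

definition real_linear_on :: "'a::real_vector set \<Rightarrow> ('a \<Rightarrow> real) \<Rightarrow> bool" where
  "real_linear_on S f \<longleftrightarrow>
     (\<forall>x\<in>S. \<forall>y\<in>S. f (x + y) = f x + f y) \<and> (\<forall>c. \<forall>x\<in>S. f (c *\<^sub>R x) = c * f x)"

definition sublinear_on :: "'a::real_vector set \<Rightarrow> ('a \<Rightarrow> real) \<Rightarrow> bool" where
  "sublinear_on E p \<longleftrightarrow>
     (\<forall>x\<in>E. \<forall>y\<in>E. p (x + y) \<le> p x + p y) \<and> (\<forall>c\<ge>0. \<forall>x\<in>E. p (c *\<^sub>R x) = c * p x)"

text \<open>Partial linear functionals are handled through their graphs, which are linear subspaces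
  of \<open>'a \<times> real\<close>; a subspace is the graph of a function iff it meets \<open>{0} \<times> UNIV\<close> only in
  the origin.\<close>

definition dominated_linear_graph :: "'a::real_vector set \<Rightarrow> ('a \<Rightarrow> real) \<Rightarrow> ('a \<times> real) set \<Rightarrow> bool"
  where "dominated_linear_graph E p G \<longleftrightarrow>
     subspace G \<and> (\<forall>a. (0, a) \<in> G \<longrightarrow> a = 0) \<and> (\<forall>(x, a)\<in>G. x \<in> E \<and> a \<le> p x)"

lemma dominated_linear_graph_unique:
  assumes "dominated_linear_graph E p G" "(x, a) \<in> G" "(x, b) \<in> G"
  shows "a = b"
proof -
  have "subspace G" using assms(1) by (simp add: dominated_linear_graph_def)
  from subspace_diff[OF this assms(2,3)] have "(0, a - b) \<in> G" by simp
  then show ?thesis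
    using assms(1) unfolding dominated_linear_graph_def by force
qed

definition extend_graph :: "('a::real_vector \<times> real) set \<Rightarrow> 'a \<Rightarrow> real \<Rightarrow> ('a \<times> real) set"
  where "extend_graph G x\<^sub>0 c = {(y + t *\<^sub>R x\<^sub>0, b + t * c) | y b t. (y, b) \<in> G}"

lemma subset_extend_graph: "G \<subseteq> extend_graph G x\<^sub>0 c"
  unfolding extend_graph_def by (force intro: exI[of _ "0::real"])

lemma subspace_extend_graph:
  assumes "subspace G"
  shows "subspace (extend_graph G x\<^sub>0 c)"
  unfolding subspace_def
proof (intro conjI ballI allI)
  show "0 \<in> extend_graph G x\<^sub>0 c"
    using subset_extend_graph subspace_0[OF assms] by blast
next
  fix u v assume "u \<in> extend_graph G x\<^sub>0 c" "v \<in> extend_graph G x\<^sub>0 c"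
  then obtain y b t y' b' t' where "(y, b) \<in> G" "(y', b') \<in> G"
    "u = (y + t *\<^sub>R x\<^sub>0, b + t * c)" "v = (y' + t' *\<^sub>R x\<^sub>0, b' + t' * c)"
    unfolding extend_graph_def by blast
  moreover have "(y + y', b + b') \<in> G" using subspace_add[OF assms calculation(1,2)] by simp
  ultimately show "u + v \<in> extend_graph G x\<^sub>0 c"
    unfolding extend_graph_def
    by (intro CollectI exI[of _ "y + y'"] exI[of _ "b + b'"] exI[of _ "t + t'"]) (simp add: algebra_simps)
next
  fix r u assume "u \<in> extend_graph G x\<^sub>0 c"
  then obtain y b t where "(y, b) \<in> G" "u = (y + t *\<^sub>R x\<^sub>0, b + t * c)"
    unfolding extend_graph_def by blast
  moreover have "(r *\<^sub>R y, r * b) \<in> G" using subspace_scale[OF assms calculation(1), of r] by simp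
  ultimately show "r *\<^sub>R u \<in> extend_graph G x\<^sub>0 c"
    unfolding extend_graph_def
    by (intro CollectI exI[of _ "r *\<^sub>R y"] exI[of _ "r * b"] exI[of _ "r * t"]) (simp add: algebra_simps)
qed

lemma dominated_linear_graph_scale:
  "dominated_linear_graph E p G \<Longrightarrow> (y, b) \<in> G \<Longrightarrow> (r *\<^sub>R y, r * b) \<in> G"
  using subspace_scale[of G "(y, b)" r] by (simp add: dominated_linear_graph_def)

lemma dominated_linear_graph_extension_value:
  assumes G: "dominated_linear_graph E p G" and p: "sublinear_on E p"
    and "x\<^sub>0 \<in> E" "subspace E"
  obtains c where "\<And>y b. (y, b) \<in> G \<Longrightarrow> b - p (y - x\<^sub>0) \<le> c"
    and "\<And>z a. (z, a) \<in> G \<Longrightarrow> c \<le> p (z + x\<^sub>0) - a"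
proof -
  have sep: "b - p (y - x\<^sub>0) \<le> p (z + x\<^sub>0) - a" if yb: "(y, b) \<in> G" and za: "(z, a) \<in> G" for y b z a
  proof -
    have "(y + z, b + a) \<in> G"
      using subspace_add[of G "(y, b)" "(z, a)"] G yb za by (simp add: dominated_linear_graph_def)
    then have "b + a \<le> p (y + z)" using G by (auto simp: dominated_linear_graph_def)
    also have "\<dots> \<le> p (y - x\<^sub>0) + p (z + x\<^sub>0)"
    proof -
      have "y - x\<^sub>0 \<in> E" "z + x\<^sub>0 \<in> E"
        using yb za G \<open>x\<^sub>0 \<in> E\<close> \<open>subspace E\<close>
        by (auto simp: dominated_linear_graph_def subspace_diff subspace_add)
      then have "p ((y - x\<^sub>0) + (z + x\<^sub>0)) \<le> p (y - x\<^sub>0) + p (z + x\<^sub>0)"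
        using p unfolding sublinear_on_def by blast
      then show ?thesis by simp
    qed
    finally show ?thesis by simp
  qed
  have "(0, 0) \<in> G"
    using G subspace_0[of G] by (simp add: dominated_linear_graph_def zero_prod_def)
  define c where "c = (SUP (y, b)\<in>G. b - p (y - x\<^sub>0))"
  have c: "b - p (y - x\<^sub>0) \<le> c" "c \<le> p (z + x\<^sub>0) - a" if "(y, b) \<in> G" "(z, a) \<in> G" for y b z a
    using that sep \<open>(0, 0) \<in> G\<close> unfolding c_def
    by (auto intro!: cSUP_upper2[where x="(y, b)"] cSUP_least bdd_aboveI2[where M="p (z + x\<^sub>0) - a"])
  show ?thesis
    by (rule that[of c]) (use c \<open>(0, 0) \<in> G\<close> in blast)+
qed

text \<open>The inequalities for \<open>c\<close> say that \<open>y + t x\<^sub>0 \<mapsto> b + t c\<close> is dominated by \<open>p\<close> on the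
  half-lines \<open>t < 0\<close> and \<open>t > 0\<close>, after rescaling by \<open>\<bar>t\<bar>\<close>.\<close>

lemma extension_value_dominated:
  assumes G: "dominated_linear_graph E p G" and p: "sublinear_on E p"
    and "x\<^sub>0 \<in> E" "subspace E"
    and c_lower: "\<And>y b. (y, b) \<in> G \<Longrightarrow> b - p (y - x\<^sub>0) \<le> c"
    and c_upper: "\<And>z a. (z, a) \<in> G \<Longrightarrow> c \<le> p (z + x\<^sub>0) - a"
    and yb: "(y, b) \<in> G"
  shows "b + t * c \<le> p (y + t *\<^sub>R x\<^sub>0)"
proof -
  have p_scale: "\<And>s x. s \<ge> 0 \<Longrightarrow> x \<in> E \<Longrightarrow> p (s *\<^sub>R x) = s * p x"
    using p by (simp add: sublinear_on_def)
  have "y \<in> E" "b \<le> p y" using G yb by (auto simp: dominated_linear_graph_def)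
  show ?thesis
  proof (cases t "0::real" rule: linorder_cases)
    case less
    define s where "s = - t"
    have "s > 0" using less by (simp add: s_def)
    have "y + t *\<^sub>R x\<^sub>0 = s *\<^sub>R ((1 / s) *\<^sub>R y - x\<^sub>0)"
      using \<open>s > 0\<close> by (simp add: s_def algebra_simps)
    then have "p (y + t *\<^sub>R x\<^sub>0) = s * p ((1 / s) *\<^sub>R y - x\<^sub>0)"
      using \<open>s > 0\<close> \<open>y \<in> E\<close> \<open>x\<^sub>0 \<in> E\<close> \<open>subspace E\<close> by (simp add: p_scale subspace_diff subspace_scale)
    moreover have "b / s - p ((1 / s) *\<^sub>R y - x\<^sub>0) \<le> c"
      using c_lower[OF dominated_linear_graph_scale[OF G yb, of "1 / s"]] by simp
    ultimately show ?thesis using \<open>s > 0\<close> by (simp add: s_def field_simps)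
  next
    case equal
    then show ?thesis using \<open>b \<le> p y\<close> by simp
  next
    case greater
    have "y + t *\<^sub>R x\<^sub>0 = t *\<^sub>R ((1 / t) *\<^sub>R y + x\<^sub>0)"
      using greater by (simp add: algebra_simps)
    then have "p (y + t *\<^sub>R x\<^sub>0) = t * p ((1 / t) *\<^sub>R y + x\<^sub>0)"
      using greater \<open>y \<in> E\<close> \<open>x\<^sub>0 \<in> E\<close> \<open>subspace E\<close> by (simp add: p_scale subspace_add subspace_scale)
    moreover have "c \<le> p ((1 / t) *\<^sub>R y + x\<^sub>0) - b / t"
      using c_upper[OF dominated_linear_graph_scale[OF G yb, of "1 / t"]] by simp
    ultimately show ?thesis using greater by (simp add: field_simps)
  qed
qed

lemma dominated_linear_graph_extend_graph:
  assumes G: "dominated_linear_graph E p G" and p: "sublinear_on E p"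
    and x\<^sub>0: "x\<^sub>0 \<in> E" "x\<^sub>0 \<notin> fst ` G" and E: "subspace E"
    and c_lower: "\<And>y b. (y, b) \<in> G \<Longrightarrow> b - p (y - x\<^sub>0) \<le> c"
    and c_upper: "\<And>z a. (z, a) \<in> G \<Longrightarrow> c \<le> p (z + x\<^sub>0) - a"
  shows "dominated_linear_graph E p (extend_graph G x\<^sub>0 c)"
proof -
  have "a = 0" if a: "(0, a) \<in> extend_graph G x\<^sub>0 c" for a
  proof -
    obtain y b t where yb: "(y, b) \<in> G" and eq: "0 = y + t *\<^sub>R x\<^sub>0" "a = b + t * c"
      using a unfolding extend_graph_def by blast
    have "t = 0"
    proof (rule ccontr)
      assume "t \<noteq> 0"
      have "x\<^sub>0 = (1 / t) *\<^sub>R (t *\<^sub>R x\<^sub>0)" using \<open>t \<noteq> 0\<close> by simp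
      also have "t *\<^sub>R x\<^sub>0 = - y" using eq(1) by (simp add: eq_neg_iff_add_eq_0 add.commute)
      finally have "x\<^sub>0 = (- 1 / t) *\<^sub>R y" by simp
      then have "(x\<^sub>0, (- 1 / t) * b) \<in> G"
        using dominated_linear_graph_scale[OF G yb, of "- 1 / t"] by (simp only:)
      then show False using x\<^sub>0(2) by force
    qed
    then show ?thesis using eq yb G by (auto simp: dominated_linear_graph_def)
  qed
  moreover have "y + t *\<^sub>R x\<^sub>0 \<in> E" if "(y, b) \<in> G" for y b t
    using that G x\<^sub>0(1) E by (auto simp: dominated_linear_graph_def subspace_add subspace_scale)
  ultimately show ?thesis
    using subspace_extend_graph[of G x\<^sub>0 c] G
      extension_value_dominated[OF G p x\<^sub>0(1) E c_lower c_upper]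
    unfolding dominated_linear_graph_def extend_graph_def by blast
qed

lemma dominated_linear_graph_extend:
  assumes G: "dominated_linear_graph E p G" and p: "sublinear_on E p"
    and x\<^sub>0: "x\<^sub>0 \<in> E" "x\<^sub>0 \<notin> fst ` G" and E: "subspace E"
  obtains G' where "dominated_linear_graph E p G'" "G \<subset> G'"
proof -
  obtain c where c_lower: "\<And>y b. (y, b) \<in> G \<Longrightarrow> b - p (y - x\<^sub>0) \<le> c"
    and c_upper: "\<And>z a. (z, a) \<in> G \<Longrightarrow> c \<le> p (z + x\<^sub>0) - a"
    using dominated_linear_graph_extension_value[OF G p x\<^sub>0(1) E] by blast
  have "(0, 0) \<in> G"
    using G subspace_0[of G] by (simp add: dominated_linear_graph_def zero_prod_def)
  then have "(x\<^sub>0, c) \<in> extend_graph G x\<^sub>0 c"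
    unfolding extend_graph_def by (intro CollectI exI[of _ 0] exI[of _ 0] exI[of _ "1::real"]) simp
  moreover have "(x\<^sub>0, c) \<notin> G" using x\<^sub>0(2) by force
  ultimately have "G \<subset> extend_graph G x\<^sub>0 c" using subset_extend_graph[of G x\<^sub>0 c] by blast
  with dominated_linear_graph_extend_graph[OF G p x\<^sub>0 E c_lower c_upper] that show ?thesis
    by blast
qed

lemma dominated_linear_graph_Union_chain:
  assumes "subset.chain \<A> \<C>" "\<C> \<noteq> {}" "\<forall>G\<in>\<C>. dominated_linear_graph E p G"
  shows "dominated_linear_graph E p (\<Union>\<C>)"
proof -
  have "subspace (\<Union>\<C>)"
    unfolding subspace_def
  proof (intro conjI ballI allI)
    show "0 \<in> \<Union>\<C>"
      using assms(2,3) by (auto simp: dominated_linear_graph_def subspace_0)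
  next
    fix u v assume "u \<in> \<Union>\<C>" "v \<in> \<Union>\<C>"
    then obtain G where "G \<in> \<C>" "{u, v} \<subseteq> G"
      using finite_subset_Union_chain[of "{u, v}" \<C> \<A>] assms(1,2) by blast
    moreover have "subspace G"
      using assms(3) \<open>G \<in> \<C>\<close> by (simp add: dominated_linear_graph_def)
    ultimately show "u + v \<in> \<Union>\<C>"
      using subspace_add by blast
  next
    fix c u assume "u \<in> \<Union>\<C>"
    then obtain G where "G \<in> \<C>" "u \<in> G" by blast
    moreover have "subspace G"
      using assms(3) \<open>G \<in> \<C>\<close> by (simp add: dominated_linear_graph_def)
    ultimately show "c *\<^sub>R u \<in> \<Union>\<C>"
      using subspace_scale by blast
  qed
  then show ?thesis
    using assms(3) unfolding dominated_linear_graph_def by blast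
qed

lemma dominated_linear_graph_maximal:
  assumes "dominated_linear_graph E p G\<^sub>0" "sublinear_on E p" "subspace E"
  obtains M where "dominated_linear_graph E p M" "G\<^sub>0 \<subseteq> M" "fst ` M = E"
proof -
  define \<A> where "\<A> = {G. dominated_linear_graph E p G \<and> G\<^sub>0 \<subseteq> G}"
  have "\<exists>M\<in>\<A>. \<forall>G\<in>\<A>. M \<subseteq> G \<longrightarrow> G = M"
  proof (rule subset_Zorn_nonempty)
    show "\<A> \<noteq> {}" using assms(1) unfolding \<A>_def by blast
  next
    fix \<C> assume \<C>: "\<C> \<noteq> {}" "subset.chain \<A> \<C>"
    then have "\<C> \<subseteq> \<A>" by (simp add: subset.chain_def)
    then have "dominated_linear_graph E p (\<Union>\<C>)"
      using dominated_linear_graph_Union_chain[OF \<C>(2,1)] unfolding \<A>_def by blast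
    moreover have "G\<^sub>0 \<subseteq> \<Union>\<C>" using \<C>(1) \<open>\<C> \<subseteq> \<A>\<close> unfolding \<A>_def by blast
    ultimately show "\<Union>\<C> \<in> \<A>" unfolding \<A>_def by blast
  qed
  then obtain M where "M \<in> \<A>" and max_\<A>: "\<forall>G\<in>\<A>. M \<subseteq> G \<longrightarrow> G = M" by blast
  then have M: "dominated_linear_graph E p M" "G\<^sub>0 \<subseteq> M" unfolding \<A>_def by simp_all
  have max: "G = M" if "dominated_linear_graph E p G" "M \<subseteq> G" for G
    using max_\<A> that M(2) unfolding \<A>_def by blast
  have "fst ` M = E"
  proof (rule ccontr)
    assume "fst ` M \<noteq> E"
    moreover have "fst ` M \<subseteq> E" using M(1) by (auto simp: dominated_linear_graph_def)
    ultimately obtain x\<^sub>0 where "x\<^sub>0 \<in> E" "x\<^sub>0 \<notin> fst ` M" by blast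
    then obtain G where "dominated_linear_graph E p G" "M \<subset> G"
      using dominated_linear_graph_extend[OF M(1) assms(2) _ _ assms(3)] by metis
    then show False using max by blast
  qed
  with M that show ?thesis by blast
qed

lemma dominated_linear_graph_of_linear:
  assumes S: "subspace S" and "S \<subseteq> E" and f: "real_linear_on S f" and "\<forall>x\<in>S. f x \<le> p x"
  shows "dominated_linear_graph E p ((\<lambda>x. (x, f x)) ` S)"
proof -
  have f_add: "\<And>x y. x \<in> S \<Longrightarrow> y \<in> S \<Longrightarrow> f (x + y) = f x + f y"
    and f_scale: "\<And>c x. x \<in> S \<Longrightarrow> f (c *\<^sub>R x) = c * f x"
    using f by (auto simp: real_linear_on_def)
  have "f 0 = 0" using f_scale[of 0 0] subspace_0[OF S] by simp
  have "subspace ((\<lambda>x. (x, f x)) ` S)"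
    unfolding subspace_def
  proof (intro conjI ballI allI)
    show "0 \<in> (\<lambda>x. (x, f x)) ` S"
      using subspace_0[OF S] \<open>f 0 = 0\<close> by (force simp: zero_prod_def)
  next
    fix u v assume "u \<in> (\<lambda>x. (x, f x)) ` S" "v \<in> (\<lambda>x. (x, f x)) ` S"
    then obtain x y where "x \<in> S" "y \<in> S" "u = (x, f x)" "v = (y, f y)" by blast
    then show "u + v \<in> (\<lambda>x. (x, f x)) ` S"
      using subspace_add[OF S] f_add by (auto intro!: image_eqI[of _ _ "x + y"])
  next
    fix c u assume "u \<in> (\<lambda>x. (x, f x)) ` S"
    then obtain x where "x \<in> S" "u = (x, f x)" by blast
    then show "c *\<^sub>R u \<in> (\<lambda>x. (x, f x)) ` S"
      using subspace_scale[OF S] f_scale by (auto intro!: image_eqI[of _ _ "c *\<^sub>R x"])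
  qed
  then show ?thesis
    using assms(2,4) \<open>f 0 = 0\<close> by (auto simp: dominated_linear_graph_def)
qed

definition graph_fun :: "('a \<times> real) set \<Rightarrow> 'a \<Rightarrow> real"
  where "graph_fun M x = (THE a. (x, a) \<in> M)"

lemma graph_fun_eq: "dominated_linear_graph E p M \<Longrightarrow> (x, a) \<in> M \<Longrightarrow> graph_fun M x = a"
  unfolding graph_fun_def using dominated_linear_graph_unique by blast

lemma graph_fun_mem:
  assumes "dominated_linear_graph E p M" "x \<in> fst ` M"
  shows "(x, graph_fun M x) \<in> M"
proof -
  obtain a where "(x, a) \<in> M" using assms(2) by force
  with graph_fun_eq[OF assms(1)] show ?thesis by simp
qed

lemma real_linear_on_graph_fun:
  assumes M: "dominated_linear_graph E p M"
  shows "real_linear_on (fst ` M) (graph_fun M)"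
proof -
  have "subspace M" using M by (simp add: dominated_linear_graph_def)
  show ?thesis
    unfolding real_linear_on_def
  proof (intro conjI ballI allI)
    fix x y assume "x \<in> fst ` M" "y \<in> fst ` M"
    then show "graph_fun M (x + y) = graph_fun M x + graph_fun M y"
      using subspace_add[OF \<open>subspace M\<close> graph_fun_mem[OF M] graph_fun_mem[OF M]]
      by (intro graph_fun_eq[OF M]) simp
  next
    fix c x assume "x \<in> fst ` M"
    then show "graph_fun M (c *\<^sub>R x) = c * graph_fun M x"
      using subspace_scale[OF \<open>subspace M\<close> graph_fun_mem[OF M], of x c]
      by (intro graph_fun_eq[OF M]) simp
  qed
qed

theorem hahn_banach_real:
  fixes f p :: "'a::real_vector \<Rightarrow> real"
  assumes "subspace E" "subspace S" "S \<subseteq> E" "real_linear_on S f" "\<forall>x\<in>S. f x \<le> p x"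
    and "sublinear_on E p"
  obtains F where "real_linear_on E F" "\<forall>x\<in>S. F x = f x" "\<forall>x\<in>E. F x \<le> p x"
proof -
  obtain M where M: "dominated_linear_graph E p M" "(\<lambda>x. (x, f x)) ` S \<subseteq> M" "fst ` M = E"
    by (rule dominated_linear_graph_maximal[OF dominated_linear_graph_of_linear[OF assms(2-5)]
          assms(6,1)])
  show ?thesis
  proof (rule that[of "graph_fun M"])
    show "real_linear_on E (graph_fun M)"
      using real_linear_on_graph_fun[OF M(1)] M(3) by simp
    show "\<forall>x\<in>S. graph_fun M x = f x"
      using M(2) graph_fun_eq[OF M(1)] by blast
    show "\<forall>x\<in>E. graph_fun M x \<le> p x"
    proof
      fix x assume "x \<in> E"
      then have "(x, graph_fun M x) \<in> M" using graph_fun_mem[OF M(1)] M(3) by simp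
      then show "graph_fun M x \<le> p x" using M(1) by (auto simp: dominated_linear_graph_def)
    qed
  qed
qed

instantiation "fun" :: (type, real_vector) real_vector
begin

definition scaleR_fun :: "real \<Rightarrow> ('a \<Rightarrow> 'b) \<Rightarrow> 'a \<Rightarrow> 'b"
  where "scaleR_fun r f = (\<lambda>x. r *\<^sub>R f x)"

instance
  by standard (auto simp: scaleR_fun_def fun_eq_iff algebra_simps)

end

lemma scaleR_fun_apply [simp]: "(r *\<^sub>R f) x = r *\<^sub>R f x"
  by (simp add: scaleR_fun_def)

definition cscale :: "complex \<Rightarrow> ('i \<Rightarrow> complex) \<Rightarrow> 'i \<Rightarrow> complex"
  where "cscale c v = (\<lambda>i. c * v i)"

lemma cscale_apply [simp]: "cscale c v i = c * v i"
  by (simp add: cscale_def)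

lemma scaleR_fun_eq_cscale: "r *\<^sub>R v = cscale (of_real r) (v :: 'i \<Rightarrow> complex)"
  by (simp add: fun_eq_iff scaleR_conv_of_real)

lemma cscale_cscale: "cscale a (cscale b v) = cscale (a * b) v"
  by (simp add: fun_eq_iff)

lemma cscale_add: "cscale c (v + w) = cscale c v + cscale c w"
  by (simp add: fun_eq_iff algebra_simps)

lemma cscale_Re_Im: "cscale c v = Re c *\<^sub>R v + Im c *\<^sub>R cscale \<i> v"
  by (simp add: fun_eq_iff scaleR_conv_of_real complex_eq_iff)

definition complex_subspace :: "('i \<Rightarrow> complex) set \<Rightarrow> bool" where
  "complex_subspace S \<longleftrightarrow> 0 \<in> S \<and> (\<forall>x\<in>S. \<forall>y\<in>S. x + y \<in> S) \<and> (\<forall>c. \<forall>x\<in>S. cscale c x \<in> S)"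

definition complex_linear_on :: "('i \<Rightarrow> complex) set \<Rightarrow> (('i \<Rightarrow> complex) \<Rightarrow> complex) \<Rightarrow> bool" where
  "complex_linear_on S f \<longleftrightarrow>
     (\<forall>x\<in>S. \<forall>y\<in>S. f (x + y) = f x + f y) \<and> (\<forall>c. \<forall>x\<in>S. f (cscale c x) = c * f x)"

definition seminorm_on :: "('i \<Rightarrow> complex) set \<Rightarrow> (('i \<Rightarrow> complex) \<Rightarrow> real) \<Rightarrow> bool" where
  "seminorm_on E p \<longleftrightarrow>
     (\<forall>x\<in>E. \<forall>y\<in>E. p (x + y) \<le> p x + p y) \<and> (\<forall>c. \<forall>x\<in>E. p (cscale c x) = cmod c * p x)"

lemma complex_subspace_imp_subspace: "complex_subspace S \<Longrightarrow> subspace S"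
  by (simp add: complex_subspace_def subspace_def scaleR_fun_eq_cscale)

lemma complex_linear_on_imp_real_linear_on_Re:
  "complex_linear_on S f \<Longrightarrow> real_linear_on S (\<lambda>x. Re (f x))"
  by (simp add: complex_linear_on_def real_linear_on_def scaleR_fun_eq_cscale)

lemma seminorm_on_imp_sublinear_on: "seminorm_on E p \<Longrightarrow> sublinear_on E p"
  by (simp add: seminorm_on_def sublinear_on_def scaleR_fun_eq_cscale)

lemma seminorm_on_nonneg:
  assumes "complex_subspace E" "seminorm_on E p" "x \<in> E"
  shows "0 \<le> p x"
proof -
  have "cscale (- 1) x \<in> E" using assms(1,3) by (simp add: complex_subspace_def)
  moreover have "x + cscale (- 1) x = cscale 0 x" by (simp add: fun_eq_iff)
  ultimately have "p (cscale 0 x) \<le> p x + p (cscale (- 1) x)"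
    using assms by (metis seminorm_on_def)
  then show ?thesis using assms(2,3) by (simp add: seminorm_on_def)
qed

lemma minus_eq_plus_cscale: "x - y = x + cscale (- 1) (y :: 'i \<Rightarrow> complex)"
  by (simp add: fun_eq_iff)

lemma complex_subspace_diff:
  assumes "complex_subspace S" "x \<in> S" "y \<in> S"
  shows "x - y \<in> S"
proof -
  have "x + cscale (- 1) y \<in> S" using assms by (simp add: complex_subspace_def)
  then show ?thesis by (simp add: minus_eq_plus_cscale)
qed

lemma complex_linear_on_zero:
  assumes "complex_subspace S" "complex_linear_on S f"
  shows "f 0 = 0"
proof -
  have "f (cscale 0 0) = 0 * f 0"
    using assms by (simp add: complex_subspace_def complex_linear_on_def)
  moreover have "cscale 0 0 = (0 :: 'a \<Rightarrow> complex)" by (simp add: fun_eq_iff)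
  ultimately show ?thesis by simp
qed

lemma complex_linear_on_diff:
  assumes "complex_subspace S" "complex_linear_on S f" "x \<in> S" "y \<in> S"
  shows "f (x - y) = f x - f y"
proof -
  have "cscale (- 1) y \<in> S" using assms by (simp add: complex_subspace_def)
  then show ?thesis
    using assms by (simp add: minus_eq_plus_cscale complex_linear_on_def)
qed

lemma complex_linear_on_from_real_part:
  assumes E: "complex_subspace E" and U: "real_linear_on E U"
  shows "complex_linear_on E (\<lambda>x. Complex (U x) (- U (cscale \<i> x)))"
proof -
  have E_cscale: "\<And>c x. x \<in> E \<Longrightarrow> cscale c x \<in> E"
    using E by (simp add: complex_subspace_def)
  have U_add: "\<And>x y. x \<in> E \<Longrightarrow> y \<in> E \<Longrightarrow> U (x + y) = U x + U y"
    and U_scale: "\<And>r x. x \<in> E \<Longrightarrow> U (r *\<^sub>R x) = r * U x"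
    using U by (auto simp: real_linear_on_def)
  have U_cscale: "U (cscale c x) = Re c * U x + Im c * U (cscale \<i> x)" if "x \<in> E" for c x
    using that E_cscale complex_subspace_imp_subspace[OF E]
    by (simp add: cscale_Re_Im[of c x] U_add U_scale subspace_scale)
  show ?thesis
    unfolding complex_linear_on_def
  proof (intro conjI ballI allI)
    fix x y assume "x \<in> E" "y \<in> E"
    then show "Complex (U (x + y)) (- U (cscale \<i> (x + y)))
        = Complex (U x) (- U (cscale \<i> x)) + Complex (U y) (- U (cscale \<i> y))"
      by (simp add: cscale_add U_add E_cscale complex_eq_iff)
  next
    fix c x assume "x \<in> E"
    have "U (cscale \<i> (cscale c x)) = - Im c * U x + Re c * U (cscale \<i> x)"
      using U_cscale[OF \<open>x \<in> E\<close>, of "\<i> * c"] by (simp add: cscale_cscale)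
    then show "Complex (U (cscale c x)) (- U (cscale \<i> (cscale c x)))
        = c * Complex (U x) (- U (cscale \<i> x))"
      using U_cscale[OF \<open>x \<in> E\<close>, of c] by (simp add: complex_eq_iff algebra_simps)
  qed
qed

lemma complex_linear_on_norm_le:
  assumes E: "complex_subspace E" and p: "seminorm_on E p" and F: "complex_linear_on E F"
    and Re_le: "\<forall>x\<in>E. Re (F x) \<le> p x" and x: "x \<in> E"
  shows "cmod (F x) \<le> p x"
proof (cases "F x = 0")
  case True
  then show ?thesis using seminorm_on_nonneg[OF E p x] by simp
next
  case False
  \<comment> \<open>rotate \<open>F x\<close> onto the positive real axis\<close>
  define c where "c = cnj (F x) / cmod (F x)"
  have "cmod c = 1" using False by (simp add: c_def norm_divide)
  have "c * F x = cnj (F x) * F x / cmod (F x)" by (simp add: c_def)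
  also have "cnj (F x) * F x = complex_of_real (cmod (F x)) ^ 2"
    using complex_norm_square[of "F x"] by (simp add: mult.commute)
  finally have "c * F x = cmod (F x)" using False by (simp add: power2_eq_square)
  moreover have "F (cscale c x) = c * F x" using F x by (simp add: complex_linear_on_def)
  ultimately have "cmod (F x) = Re (F (cscale c x))" by simp
  also have "\<dots> \<le> p (cscale c x)" using Re_le E x by (simp add: complex_subspace_def)
  also have "\<dots> = p x" using p x \<open>cmod c = 1\<close> by (simp add: seminorm_on_def)
  finally show ?thesis .
qed

text \<open>The complex case reduces to the real one through \<open>F x = U x - \<i> U (\<i> x)\<close>, where
  \<open>U\<close> extends the real part of \<open>f\<close>.\<close>

theorem hahn_banach_complex:
  fixes f :: "('i \<Rightarrow> complex) \<Rightarrow> complex"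
  assumes E: "complex_subspace E" and S: "complex_subspace S" "S \<subseteq> E"
    and f: "complex_linear_on S f" and p: "seminorm_on E p" and f_le: "\<forall>x\<in>S. cmod (f x) \<le> p x"
  obtains F where "complex_linear_on E F" "\<forall>x\<in>S. F x = f x" "\<forall>x\<in>E. cmod (F x) \<le> p x"
proof -
  have "\<forall>x\<in>S. Re (f x) \<le> p x" using f_le complex_Re_le_cmod order_trans by blast
  then obtain U where U: "real_linear_on E U" "\<forall>x\<in>S. U x = Re (f x)" "\<forall>x\<in>E. U x \<le> p x"
    by (rule hahn_banach_real[OF complex_subspace_imp_subspace[OF E]
          complex_subspace_imp_subspace[OF S(1)] S(2) complex_linear_on_imp_real_linear_on_Re[OF f]
          _ seminorm_on_imp_sublinear_on[OF p]])
  define F where "F x = Complex (U x) (- U (cscale \<i> x))" for x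
  have F: "complex_linear_on E F"
    unfolding F_def by (rule complex_linear_on_from_real_part[OF E U(1)])
  moreover have "\<forall>x\<in>S. F x = f x"
  proof
    fix x assume "x \<in> S"
    have "cscale \<i> x \<in> S" using S(1) \<open>x \<in> S\<close> by (simp add: complex_subspace_def)
    then have "U (cscale \<i> x) = - Im (f x)"
      using U(2) f \<open>x \<in> S\<close> by (simp add: complex_linear_on_def)
    then show "F x = f x" using U(2) \<open>x \<in> S\<close> by (simp add: F_def complex_eq_iff)
  qed
  moreover have "\<forall>x\<in>E. cmod (F x) \<le> p x"
    using complex_linear_on_norm_le[OF E p F] U(3) by (simp add: F_def)
  ultimately show ?thesis using that by blast
qed

section \<open>Seminormed sequence spaces\<close>

lemma seq_add_eq_plus [simp]: "seq_add x y = x + y"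
  by (simp add: seq_add_def fun_eq_iff)

lemma seq_diff_eq_minus [simp]: "seq_diff x y = x - y"
  by (simp add: seq_diff_def fun_eq_iff)

lemma seq_scale_eq_cscale [simp]: "seq_scale c x = cscale c x"
  by (simp add: seq_scale_def cscale_def)

lemma lambda_zero_eq_zero [simp]: "(\<lambda>j. 0) = 0"
  by (simp add: fun_eq_iff)

lemma is_subspace_w_iff: "is_subspace_w X \<longleftrightarrow> complex_subspace X"
  by (simp add: is_subspace_w_def complex_subspace_def)

lemma FK_dual_iff:
  "f \<in> FK_dual X \<rho> \<longleftrightarrow> complex_linear_on X f \<and> continuous_map (FK_top X \<rho>) euclidean f"
  by (simp add: FK_dual_def complex_linear_on_def)

locale seminormed_sequence_space =
  fixes X :: "(nat \<Rightarrow> complex) set" and \<rho> :: "nat \<Rightarrow> (nat \<Rightarrow> complex) \<Rightarrow> real"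
  assumes subspace_w: "is_subspace_w X" and seminorms: "\<And>k. is_seminorm_on X (\<rho> k)"
begin

lemma complex_subspace: "complex_subspace X"
  using subspace_w by (simp add: is_subspace_w_iff)

lemma zero_mem [simp]: "0 \<in> X"
  and add_mem: "x \<in> X \<Longrightarrow> y \<in> X \<Longrightarrow> x + y \<in> X"
  and cscale_mem: "x \<in> X \<Longrightarrow> cscale c x \<in> X"
  using complex_subspace by (auto simp: complex_subspace_def)

lemma diff_mem: "x \<in> X \<Longrightarrow> y \<in> X \<Longrightarrow> x - y \<in> X"
  by (rule complex_subspace_diff[OF complex_subspace])

lemma seminorm_nonneg: "x \<in> X \<Longrightarrow> 0 \<le> \<rho> k x"
  and seminorm_add: "x \<in> X \<Longrightarrow> y \<in> X \<Longrightarrow> \<rho> k (x + y) \<le> \<rho> k x + \<rho> k y"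
  and seminorm_cscale: "x \<in> X \<Longrightarrow> \<rho> k (cscale c x) = cmod c * \<rho> k x"
  using seminorms[of k] by (auto simp: is_seminorm_on_def)

lemma seminorm_zero [simp]: "\<rho> k 0 = 0"
proof -
  have "cscale 0 0 = (0 :: nat \<Rightarrow> complex)" by (simp add: fun_eq_iff)
  then show ?thesis using seminorm_cscale[of 0 k 0] by simp
qed

lemma seminorm_diff_triangle:
  "x \<in> X \<Longrightarrow> y \<in> X \<Longrightarrow> z \<in> X \<Longrightarrow> \<rho> k (z - x) \<le> \<rho> k (z - y) + \<rho> k (y - x)"
  using seminorm_add[of "z - y" "y - x" k] by (simp add: diff_mem)

definition seminorm_ball :: "nat set \<Rightarrow> (nat \<Rightarrow> complex) \<Rightarrow> real \<Rightarrow> (nat \<Rightarrow> complex) set"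
  where "seminorm_ball K y e = {z \<in> X. \<forall>k\<in>K. \<rho> k (z - y) < e}"

lemma centre_in_seminorm_ball: "y \<in> X \<Longrightarrow> e > 0 \<Longrightarrow> y \<in> seminorm_ball K y e"
  by (simp add: seminorm_ball_def)

lemma topspace_FK_top [simp]: "topspace (FK_top X \<rho>) = X"
proof -
  have "y \<in> \<Union>{{y \<in> X. \<rho> k (seq_diff y x) < e} | k x e. x \<in> X \<and> e > 0}" if "y \<in> X" for y
  proof (rule UnionI)
    show "{z \<in> X. \<rho> 0 (z - y) < 1} \<in> {{y \<in> X. \<rho> k (seq_diff y x) < e} | k x e. x \<in> X \<and> e > 0}"
      by (intro CollectI exI[of _ 0] exI[of _ y] exI[of _ "1::real"]) (simp add: that)
  qed (simp add: that)
  then show ?thesis unfolding FK_top_def by auto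
qed

lemma openin_seminorm_ball:
  assumes "y \<in> X" "finite K" "e > 0"
  shows "openin (FK_top X \<rho>) (seminorm_ball K y e)"
  using assms(2)
proof (induction K rule: finite_induct)
  case empty
  then show ?case using openin_topspace[of "FK_top X \<rho>"] by (simp add: seminorm_ball_def)
next
  case (insert k K)
  have "openin (FK_top X \<rho>) {z \<in> X. \<rho> k (seq_diff z y) < e}"
    unfolding FK_top_def using assms by (intro topology_generated_by_Basis) blast
  moreover have "seminorm_ball (insert k K) y e = {z \<in> X. \<rho> k (seq_diff z y) < e} \<inter> seminorm_ball K y e"
    by (auto simp: seminorm_ball_def)
  ultimately show ?case using insert.IH by auto
qed

lemma openin_FK_top_contains_ball:
  assumes "openin (FK_top X \<rho>) U" "y \<in> U"
  obtains K e where "finite K" "e > 0" "seminorm_ball K y e \<subseteq> U"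
proof -
  have "generate_topology_on {{y \<in> X. \<rho> k (seq_diff y x) < e} | k x e. x \<in> X \<and> e > 0} U"
    using assms(1) unfolding FK_top_def by (rule openin_topology_generated_by)
  then have "\<exists>K e. finite K \<and> e > 0 \<and> seminorm_ball K y e \<subseteq> U"
    using assms(2)
  proof (induction arbitrary: y)
    case Empty
    then show ?case by simp
  next
    case (Int A B)
    from Int.prems have "y \<in> A" "y \<in> B" by simp_all
    from Int.IH(1)[OF \<open>y \<in> A\<close>] obtain K\<^sub>1 e\<^sub>1
      where K\<^sub>1: "finite K\<^sub>1" "e\<^sub>1 > 0" "seminorm_ball K\<^sub>1 y e\<^sub>1 \<subseteq> A" by blast
    from Int.IH(2)[OF \<open>y \<in> B\<close>] obtain K\<^sub>2 e\<^sub>2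
      where K\<^sub>2: "finite K\<^sub>2" "e\<^sub>2 > 0" "seminorm_ball K\<^sub>2 y e\<^sub>2 \<subseteq> B" by blast
    have "seminorm_ball (K\<^sub>1 \<union> K\<^sub>2) y (min e\<^sub>1 e\<^sub>2) \<subseteq> seminorm_ball K\<^sub>1 y e\<^sub>1"
      "seminorm_ball (K\<^sub>1 \<union> K\<^sub>2) y (min e\<^sub>1 e\<^sub>2) \<subseteq> seminorm_ball K\<^sub>2 y e\<^sub>2"
      by (auto simp: seminorm_ball_def)
    with K\<^sub>1 K\<^sub>2 show ?case
      by (intro exI[of _ "K\<^sub>1 \<union> K\<^sub>2"] exI[of _ "min e\<^sub>1 e\<^sub>2"]) auto
  next
    case (UN \<U>)
    from UN.prems obtain A where "A \<in> \<U>" "y \<in> A" by blast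
    with UN.IH obtain K e where "finite K" "e > 0" "seminorm_ball K y e \<subseteq> A" by blast
    with \<open>A \<in> \<U>\<close> show ?case by (intro exI[of _ K] exI[of _ e]) auto
  next
    case (Basis B)
    then obtain k x e where B: "B = {z \<in> X. \<rho> k (z - x) < e}" "x \<in> X" and "y \<in> B"
      by auto
    have "seminorm_ball {k} y (e - \<rho> k (y - x)) \<subseteq> B"
    proof
      fix z assume "z \<in> seminorm_ball {k} y (e - \<rho> k (y - x))"
      then have "z \<in> X" "\<rho> k (z - y) + \<rho> k (y - x) < e" by (auto simp: seminorm_ball_def)
      with seminorm_diff_triangle[of x y z k] \<open>y \<in> B\<close> B show "z \<in> B" by auto
    qed
    then show ?case
      using \<open>y \<in> B\<close> B(1) by (intro exI[of _ "{k}"] exI[of _ "e - \<rho> k (y - x)"]) auto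
  qed
  with that show ?thesis by blast
qed

lemma openin_FK_top_iff:
  "openin (FK_top X \<rho>) U \<longleftrightarrow> U \<subseteq> X \<and> (\<forall>y\<in>U. \<exists>K e. finite K \<and> e > 0 \<and> seminorm_ball K y e \<subseteq> U)"
proof
  assume "openin (FK_top X \<rho>) U"
  show "U \<subseteq> X \<and> (\<forall>y\<in>U. \<exists>K e. finite K \<and> e > 0 \<and> seminorm_ball K y e \<subseteq> U)"
  proof (intro conjI ballI)
    show "U \<subseteq> X" using openin_subset[of "FK_top X \<rho>" U] \<open>openin (FK_top X \<rho>) U\<close> by simp
    fix y assume "y \<in> U"
    then obtain K e where "finite K" "e > 0" "seminorm_ball K y e \<subseteq> U"
      by (rule openin_FK_top_contains_ball[OF \<open>openin (FK_top X \<rho>) U\<close>])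
    then show "\<exists>K e. finite K \<and> e > 0 \<and> seminorm_ball K y e \<subseteq> U" by blast
  qed
next
  assume U: "U \<subseteq> X \<and> (\<forall>y\<in>U. \<exists>K e. finite K \<and> e > 0 \<and> seminorm_ball K y e \<subseteq> U)"
  show "openin (FK_top X \<rho>) U"
  proof (subst openin_subopen, intro ballI)
    fix y assume "y \<in> U"
    with U obtain K e where "finite K" "e > 0" "seminorm_ball K y e \<subseteq> U" by blast
    moreover have "y \<in> X" using U \<open>y \<in> U\<close> by blast
    ultimately show "\<exists>T. openin (FK_top X \<rho>) T \<and> y \<in> T \<and> T \<subseteq> U"
      by (intro exI[of _ "seminorm_ball K y e"]) (simp add: openin_seminorm_ball centre_in_seminorm_ball)
  qed
qed

lemma continuous_map_FK_top_iff:
  fixes f :: "(nat \<Rightarrow> complex) \<Rightarrow> 'b::metric_space"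
  shows "continuous_map (FK_top X \<rho>) euclidean f \<longleftrightarrow>
    (\<forall>y\<in>X. \<forall>\<epsilon>>0. \<exists>K \<delta>. finite K \<and> \<delta> > 0 \<and> (\<forall>z\<in>seminorm_ball K y \<delta>. dist (f z) (f y) < \<epsilon>))"
proof
  assume cont: "continuous_map (FK_top X \<rho>) euclidean f"
  show "\<forall>y\<in>X. \<forall>\<epsilon>>0. \<exists>K \<delta>. finite K \<and> \<delta> > 0 \<and> (\<forall>z\<in>seminorm_ball K y \<delta>. dist (f z) (f y) < \<epsilon>)"
  proof (intro ballI allI impI)
    fix y and \<epsilon> :: real assume "y \<in> X" "\<epsilon> > 0"
    have "openin (FK_top X \<rho>) {z \<in> X. f z \<in> ball (f y) \<epsilon>}"
      using openin_continuous_map_preimage[OF cont, of "ball (f y) \<epsilon>"] by simp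
    with \<open>y \<in> X\<close> \<open>\<epsilon> > 0\<close> obtain K \<delta> where "finite K" "\<delta> > 0"
      and "seminorm_ball K y \<delta> \<subseteq> {z \<in> X. f z \<in> ball (f y) \<epsilon>}"
      unfolding openin_FK_top_iff by auto
    then show "\<exists>K \<delta>. finite K \<and> \<delta> > 0 \<and> (\<forall>z\<in>seminorm_ball K y \<delta>. dist (f z) (f y) < \<epsilon>)"
      by (intro exI[of _ K] exI[of _ \<delta>]) (auto simp: dist_commute)
  qed
next
  assume small: "\<forall>y\<in>X. \<forall>\<epsilon>>0. \<exists>K \<delta>. finite K \<and> \<delta> > 0 \<and> (\<forall>z\<in>seminorm_ball K y \<delta>. dist (f z) (f y) < \<epsilon>)"
  show "continuous_map (FK_top X \<rho>) euclidean f"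
    unfolding continuous_map_def
  proof (intro conjI allI impI)
    fix U :: "'b set" assume "openin euclidean U"
    show "openin (FK_top X \<rho>) {x \<in> topspace (FK_top X \<rho>). f x \<in> U}"
      unfolding openin_FK_top_iff
    proof (intro conjI ballI)
      fix y assume y: "y \<in> {x \<in> topspace (FK_top X \<rho>). f x \<in> U}"
      then obtain \<epsilon> where "\<epsilon> > 0" "ball (f y) \<epsilon> \<subseteq> U"
        using \<open>openin euclidean U\<close> open_contains_ball by force
      moreover have "\<exists>K \<delta>. finite K \<and> \<delta> > 0 \<and> (\<forall>z\<in>seminorm_ball K y \<delta>. dist (f z) (f y) < \<epsilon>)"
        using small y \<open>\<epsilon> > 0\<close> by simp
      then obtain K \<delta> where "finite K" "\<delta> > 0"
        and "\<forall>z\<in>seminorm_ball K y \<delta>. dist (f z) (f y) < \<epsilon>" by blast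
      ultimately show "\<exists>K e. finite K \<and> e > 0 \<and> seminorm_ball K y e \<subseteq> {x \<in> topspace (FK_top X \<rho>). f x \<in> U}"
        by (intro exI[of _ K] exI[of _ \<delta>]) (auto simp: seminorm_ball_def dist_commute)
    qed auto
  qed auto
qed

lemma tendsto_FK_top:
  fixes f :: "(nat \<Rightarrow> complex) \<Rightarrow> 'b::metric_space"
  assumes "continuous_map (FK_top X \<rho>) euclidean f" "y \<in> X" "\<And>n. s n \<in> X"
    and "\<And>k. (\<lambda>n. \<rho> k (s n - y)) \<longlonglongrightarrow> 0"
  shows "(\<lambda>n. f (s n)) \<longlonglongrightarrow> f y"
proof (rule tendstoI)
  fix \<epsilon> :: real assume "\<epsilon> > 0"
  then obtain K \<delta> where "finite K" "\<delta> > 0"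
    and ball: "\<forall>z\<in>seminorm_ball K y \<delta>. dist (f z) (f y) < \<epsilon>"
    using assms(1,2) unfolding continuous_map_FK_top_iff by blast
  have "\<forall>\<^sub>F n in sequentially. \<forall>k\<in>K. \<rho> k (s n - y) < \<delta>"
    using \<open>finite K\<close> by (intro eventually_ball_finite ballI order_tendstoD(2)[OF assms(4) \<open>\<delta> > 0\<close>])
  then show "\<forall>\<^sub>F n in sequentially. dist (f (s n)) (f y) < \<epsilon>"
    by eventually_elim (use ball assms(3) in \<open>auto simp: seminorm_ball_def\<close>)
qed

lemma FK_dual_bounded:
  assumes "f \<in> FK_dual X \<rho>"
  obtains K C where "finite K" "0 \<le> C" "\<And>z. z \<in> X \<Longrightarrow> cmod (f z) \<le> C * (\<Sum>k\<in>K. \<rho> k z)"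
proof -
  have lin: "complex_linear_on X f" and cont: "continuous_map (FK_top X \<rho>) euclidean f"
    using assms by (simp_all add: FK_dual_iff)
  have "f 0 = 0" by (rule complex_linear_on_zero[OF complex_subspace lin])
  have "\<exists>K \<delta>. finite K \<and> \<delta> > 0 \<and> (\<forall>z\<in>seminorm_ball K 0 \<delta>. dist (f z) (f 0) < 1)"
    using cont zero_mem zero_less_one unfolding continuous_map_FK_top_iff by blast
  then obtain K \<delta> where "finite K" "\<delta> > 0" and small: "\<forall>z\<in>seminorm_ball K 0 \<delta>. cmod (f z) < 1"
    using \<open>f 0 = 0\<close> by (auto simp: dist_norm)
  have "cmod (f z) \<le> (1 / \<delta>) * (\<Sum>k\<in>K. \<rho> k z)" if "z \<in> X" for z
  proof (rule dense_ge)
    fix r assume r: "(1 / \<delta>) * (\<Sum>k\<in>K. \<rho> k z) < r"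
    have "0 \<le> (\<Sum>k\<in>K. \<rho> k z)" using seminorm_nonneg[OF \<open>z \<in> X\<close>] by (simp add: sum_nonneg)
    have "(\<Sum>k\<in>K. \<rho> k z) < r * \<delta>" using r \<open>\<delta> > 0\<close> by (simp add: field_simps)
    with \<open>0 \<le> (\<Sum>k\<in>K. \<rho> k z)\<close> have "r > 0"
      using zero_less_mult_pos2[of r \<delta>] \<open>\<delta> > 0\<close> by linarith
    \<comment> \<open>scaling \<open>z\<close> by \<open>1 / r\<close> moves it into the ball on which \<open>f\<close> is small\<close>
    have "cscale (1 / r) z \<in> seminorm_ball K 0 \<delta>"
    proof -
      have "\<rho> k (cscale (1 / r) z) < \<delta>" if "k \<in> K" for k
      proof -
        have "\<rho> k z \<le> (\<Sum>k\<in>K. \<rho> k z)"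
          using \<open>finite K\<close> that seminorm_nonneg[OF \<open>z \<in> X\<close>] by (intro member_le_sum) auto
        then show ?thesis
          using \<open>r > 0\<close> \<open>(\<Sum>k\<in>K. \<rho> k z) < r * \<delta>\<close>
          by (simp add: seminorm_cscale[OF \<open>z \<in> X\<close>] norm_divide field_simps)
      qed
      then show ?thesis using cscale_mem[OF \<open>z \<in> X\<close>] by (simp add: seminorm_ball_def)
    qed
    then have "cmod (f z) / r < 1"
      using small lin \<open>z \<in> X\<close> \<open>r > 0\<close> by (auto simp: complex_linear_on_def norm_divide)
    then show "cmod (f z) \<le> r" using \<open>r > 0\<close> by simp
  qed
  with \<open>finite K\<close> \<open>\<delta> > 0\<close> show ?thesis by (intro that[of K "1 / \<delta>"]) simp_all
qed

lemma bounded_imp_FK_dual: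
  assumes lin: "complex_linear_on X f" and "finite K"
    and bound: "\<And>z. z \<in> X \<Longrightarrow> cmod (f z) \<le> C * (\<Sum>k\<in>K. \<rho> k z)"
  shows "f \<in> FK_dual X \<rho>"
proof -
  have "\<exists>K \<delta>. finite K \<and> \<delta> > 0 \<and> (\<forall>z\<in>seminorm_ball K y \<delta>. dist (f z) (f y) < \<epsilon>)"
    if "y \<in> X" "\<epsilon> > 0" for y \<epsilon>
  proof -
    define \<delta> where "\<delta> = \<epsilon> / (\<bar>C\<bar> * card K + 1)"
    have "\<delta> > 0" using \<open>\<epsilon> > 0\<close> by (simp add: \<delta>_def add_nonneg_pos)
    have "dist (f z) (f y) < \<epsilon>" if z: "z \<in> seminorm_ball K y \<delta>" for z
    proof -
      have "z \<in> X" "z - y \<in> X" using z diff_mem \<open>y \<in> X\<close> by (auto simp: seminorm_ball_def)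
      then have "dist (f z) (f y) = cmod (f (z - y))"
        using complex_linear_on_diff[OF complex_subspace lin _ \<open>y \<in> X\<close>] by (simp add: dist_norm)
      also have "\<dots> \<le> C * (\<Sum>k\<in>K. \<rho> k (z - y))" by (rule bound[OF \<open>z - y \<in> X\<close>])
      also have "\<dots> \<le> \<bar>C\<bar> * (\<Sum>k\<in>K. \<rho> k (z - y))"
        using seminorm_nonneg[OF \<open>z - y \<in> X\<close>] by (intro mult_right_mono sum_nonneg) auto
      also have "\<dots> \<le> \<bar>C\<bar> * (card K * \<delta>)"
      proof (intro mult_left_mono)
        show "(\<Sum>k\<in>K. \<rho> k (z - y)) \<le> card K * \<delta>"
          using z by (intro sum_bounded_above) (auto simp: seminorm_ball_def less_imp_le)
      qed simp
      also have "\<dots> = \<epsilon> * (\<bar>C\<bar> * card K) / (\<bar>C\<bar> * card K + 1)"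
        by (simp add: \<delta>_def)
      also have "\<dots> < \<epsilon>"
      proof -
        have "0 < \<bar>C\<bar> * card K + 1" by (simp add: add_nonneg_pos)
        then show ?thesis using \<open>\<epsilon> > 0\<close> by (simp add: pos_divide_less_eq distrib_left)
      qed
      finally show ?thesis .
    qed
    with \<open>finite K\<close> \<open>\<delta> > 0\<close> show ?thesis by blast
  qed
  then show ?thesis using lin by (simp add: FK_dual_iff continuous_map_FK_top_iff)
qed

end

section \<open>Intersections of FK-spaces\<close>

lemma is_seminorm_on_subset: "is_seminorm_on X r \<Longrightarrow> Z \<subseteq> X \<Longrightarrow> is_seminorm_on Z r"
  unfolding is_seminorm_on_def by blast

lemma is_FK_imp_seminormed_sequence_space: "is_FK X \<rho> \<Longrightarrow> seminormed_sequence_space X \<rho>"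
  by (simp add: is_FK_def seminormed_sequence_space_def)

lemma continuous_map_FK_top_finer:
  fixes f :: "(nat \<Rightarrow> complex) \<Rightarrow> 'b::metric_space"
  assumes X: "seminormed_sequence_space X \<rho>" and Z: "seminormed_sequence_space Z \<sigma>"
    and "Z \<subseteq> X" and \<sigma>: "\<And>k. \<sigma> (\<iota> k) = \<rho> k"
    and cont: "continuous_map (FK_top X \<rho>) euclidean f"
  shows "continuous_map (FK_top Z \<sigma>) euclidean f"
  unfolding seminormed_sequence_space.continuous_map_FK_top_iff[OF Z]
proof (intro ballI allI impI)
  fix y and \<epsilon> :: real assume "y \<in> Z" "\<epsilon> > 0"
  then have "y \<in> X" using \<open>Z \<subseteq> X\<close> by blast
  with cont \<open>\<epsilon> > 0\<close> have "\<exists>K \<delta>. finite K \<and> \<delta> > 0 \<and>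
      (\<forall>z\<in>seminormed_sequence_space.seminorm_ball X \<rho> K y \<delta>. dist (f z) (f y) < \<epsilon>)"
    unfolding seminormed_sequence_space.continuous_map_FK_top_iff[OF X] by simp
  then obtain K \<delta> where "finite K" "\<delta> > 0"
    and small: "\<forall>z\<in>seminormed_sequence_space.seminorm_ball X \<rho> K y \<delta>. dist (f z) (f y) < \<epsilon>"
    by blast
  have "seminormed_sequence_space.seminorm_ball Z \<sigma> (\<iota> ` K) y \<delta>
      \<subseteq> seminormed_sequence_space.seminorm_ball X \<rho> K y \<delta>"
    using \<open>Z \<subseteq> X\<close> \<sigma> by (auto simp: seminormed_sequence_space.seminorm_ball_def[OF X]
        seminormed_sequence_space.seminorm_ball_def[OF Z])
  with small \<open>finite K\<close> \<open>\<delta> > 0\<close>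
  show "\<exists>K \<delta>. finite K \<and> \<delta> > 0 \<and>
      (\<forall>z\<in>seminormed_sequence_space.seminorm_ball Z \<sigma> K y \<delta>. dist (f z) (f y) < \<epsilon>)"
    by (intro exI[of _ "\<iota> ` K"] exI[of _ \<delta>]) auto
qed

lemma inter_seminorms_prod_encode [simp]: "inter_seminorms \<rho>s (prod_encode (n, k)) = \<rho>s n k"
  by (simp add: inter_seminorms_def)

lemma sum_inter_seminorms:
  "(\<Sum>m\<in>K. inter_seminorms \<rho>s m z) = (\<Sum>(n, k)\<in>prod_decode ` K. \<rho>s n k z)"
  by (simp add: inter_seminorms_def sum.reindex inj_on_def case_prod_beta)

lemma seminormed_sequence_space_Inter:
  assumes "\<And>n. seminormed_sequence_space (Y n) (\<rho>s n)"
  shows "seminormed_sequence_space (\<Inter>n. Y n) (inter_seminorms \<rho>s)"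
proof
  show "is_subspace_w (\<Inter>n. Y n)"
    unfolding is_subspace_w_iff complex_subspace_def
    by (simp add: seminormed_sequence_space.zero_mem[OF assms] seminormed_sequence_space.add_mem[OF assms]
        seminormed_sequence_space.cscale_mem[OF assms])
  have "is_seminorm_on (Y n) (\<rho>s n k)" for n k
    by (rule seminormed_sequence_space.seminorms[OF assms])
  then show "is_seminorm_on (\<Inter>n. Y n) (inter_seminorms \<rho>s m)" for m
    unfolding inter_seminorms_def by (rule is_seminorm_on_subset) auto
qed

lemma is_FK_separating: "is_FK X \<rho> \<Longrightarrow> x \<in> X \<Longrightarrow> (\<And>k. \<rho> k x = 0) \<Longrightarrow> x = 0"
  unfolding is_FK_def by simp

lemma is_FK_complete:
  assumes "is_FK X \<rho>" "\<And>i. s i \<in> X"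
    and "\<And>k e. e > 0 \<Longrightarrow> \<exists>N. \<forall>i\<ge>N. \<forall>j\<ge>N. \<rho> k (s i - s j) < e"
  obtains x where "x \<in> X" "\<And>k. (\<lambda>i. \<rho> k (s i - x)) \<longlonglongrightarrow> 0"
  using assms unfolding is_FK_def seq_diff_eq_minus by metis

lemma is_FK_continuous_coordinate: "is_FK X \<rho> \<Longrightarrow> continuous_map (FK_top X \<rho>) euclidean (\<lambda>x. x j)"
  unfolding is_FK_def by simp

lemma is_FK_Inter_complete:
  assumes FK: "\<And>n. is_FK (Y n) (\<rho>s n)" and s: "\<And>i. s i \<in> (\<Inter>n. Y n)"
    and Cauchy: "\<And>m e. e > 0 \<Longrightarrow> \<exists>N. \<forall>i\<ge>N. \<forall>j\<ge>N. inter_seminorms \<rho>s m (s i - s j) < e"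
  obtains x where "x \<in> (\<Inter>n. Y n)" "\<And>m. (\<lambda>i. inter_seminorms \<rho>s m (s i - x)) \<longlonglongrightarrow> 0"
proof -
  have "\<exists>y. y \<in> Y n \<and> (\<forall>k. (\<lambda>i. \<rho>s n k (s i - y)) \<longlonglongrightarrow> 0)" for n
  proof -
    have "\<exists>N. \<forall>i\<ge>N. \<forall>j\<ge>N. \<rho>s n k (s i - s j) < e" if "e > 0" for k e
      using Cauchy[OF that, of "prod_encode (n, k)"] by simp
    moreover have "s i \<in> Y n" for i using s by blast
    ultimately obtain y where "y \<in> Y n" "\<And>k. (\<lambda>i. \<rho>s n k (s i - y)) \<longlonglongrightarrow> 0"
      using is_FK_complete[OF FK[of n], of s] by blast
    then show ?thesis by blast
  qed
  then obtain y where y: "\<And>n. y n \<in> Y n" "\<And>n k. (\<lambda>i. \<rho>s n k (s i - y n)) \<longlonglongrightarrow> 0"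
    by metis
  \<comment> \<open>the limits in the different \<open>Y n\<close> agree because all of them are coordinatewise limits\<close>
  have "(\<lambda>i. s i j) \<longlonglongrightarrow> y n j" for n j
    using s by (intro seminormed_sequence_space.tendsto_FK_top[OF
          is_FK_imp_seminormed_sequence_space[OF FK] is_FK_continuous_coordinate[OF FK] y(1) _ y(2)])
      blast
  then have y_const: "y n = y 0" for n
    by (intro ext LIMSEQ_unique)
  have "y 0 \<in> Y n" for n using y(1)[of n] y_const[of n] by argo
  then have "y 0 \<in> (\<Inter>n. Y n)" by blast
  moreover have "(\<lambda>i. inter_seminorms \<rho>s m (s i - y 0)) \<longlonglongrightarrow> 0" for m
    using y(2)[of "fst (prod_decode m)" "snd (prod_decode m)"]
    unfolding inter_seminorms_def y_const[of "fst (prod_decode m)"] .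
  ultimately show ?thesis using that by blast
qed

lemma is_FK_Inter:
  assumes FK: "\<And>n. is_FK (Y n) (\<rho>s n)"
  shows "is_FK (\<Inter>n. Y n) (inter_seminorms \<rho>s)"
proof -
  have Y: "seminormed_sequence_space (Y n) (\<rho>s n)" for n
    using FK by (rule is_FK_imp_seminormed_sequence_space)
  note Z = seminormed_sequence_space_Inter[OF Y]
  show ?thesis
    unfolding is_FK_def seq_diff_eq_minus
  proof (intro conjI allI ballI impI)
    show "is_subspace_w (\<Inter>n. Y n)" by (rule seminormed_sequence_space.subspace_w[OF Z])
    show "is_seminorm_on (\<Inter>n. Y n) (inter_seminorms \<rho>s k)" for k
      by (rule seminormed_sequence_space.seminorms[OF Z])
  next
    fix x assume x: "x \<in> (\<Inter>n. Y n)" "\<forall>m. inter_seminorms \<rho>s m x = 0"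
    have "\<rho>s 0 k x = 0" for k
      using spec[OF x(2), of "prod_encode (0, k)"] by simp
    then have "x = 0"
      using is_FK_separating[OF FK[of 0], of x] x(1) by blast
    then show "x = (\<lambda>j. 0)" by simp
  next
    fix s :: "nat \<Rightarrow> nat \<Rightarrow> complex"
    assume s: "(\<forall>i. s i \<in> (\<Inter>n. Y n)) \<and>
      (\<forall>m. \<forall>e>0. \<exists>N. \<forall>i\<ge>N. \<forall>j\<ge>N. inter_seminorms \<rho>s m (s i - s j) < e)"
    obtain x where "x \<in> (\<Inter>n. Y n)" "\<And>m. (\<lambda>i. inter_seminorms \<rho>s m (s i - x)) \<longlonglongrightarrow> 0"
    proof (rule is_FK_Inter_complete[OF FK, of s])
      show "s i \<in> (\<Inter>n. Y n)" for i using s by blast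
      show "\<exists>N. \<forall>i\<ge>N. \<forall>j\<ge>N. inter_seminorms \<rho>s m (s i - s j) < e" if "e > 0" for m e
        using s that by blast
    qed blast
    then show "\<exists>x\<in>\<Inter>n. Y n. \<forall>m. (\<lambda>i. inter_seminorms \<rho>s m (s i - x)) \<longlonglongrightarrow> 0" by blast
  next
    show "continuous_map (FK_top (\<Inter>n. Y n) (inter_seminorms \<rho>s)) euclidean (\<lambda>x. x j)" for j
      by (rule continuous_map_FK_top_finer[OF Y Z _ inter_seminorms_prod_encode[of \<rho>s 0]
            is_FK_continuous_coordinate[OF FK]]) blast
  qed
qed

section \<open>The dual of an intersection\<close>

text \<open>The product of the \<open>Y n\<close> is modelled by functions on \<open>nat \<times> nat\<close>; the \<open>n\<close>-th component
  of \<open>v\<close> is \<open>curry v n\<close>.\<close>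

definition seq_product :: "(nat \<Rightarrow> (nat \<Rightarrow> complex) set) \<Rightarrow> (nat \<times> nat \<Rightarrow> complex) set"
  where "seq_product Y = {v. \<forall>n. curry v n \<in> Y n}"

definition embed_seq :: "nat \<Rightarrow> (nat \<Rightarrow> complex) \<Rightarrow> nat \<times> nat \<Rightarrow> complex"
  where "embed_seq n y = (\<lambda>(m, j). if m = n then y j else 0)"

lemma curry_plus [simp]: "curry (v + w) n = curry v n + curry w n"
  and curry_cscale [simp]: "curry (cscale c v) n = cscale c (curry v n)"
  and curry_minus [simp]: "curry (v - w) n = curry v n - curry w n"
  and curry_zero [simp]: "curry 0 n = 0"
  and curry_diagonal [simp]: "curry (z \<circ> snd) n = z"
  and curry_embed_seq [simp]: "curry (embed_seq m y) n = (if n = m then y else 0)"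
  by (auto simp: fun_eq_iff embed_seq_def)

lemma embed_seq_plus: "embed_seq n (y + y') = embed_seq n y + embed_seq n y'"
  and embed_seq_cscale: "embed_seq n (cscale c y) = cscale c (embed_seq n y)"
  by (auto simp: fun_eq_iff embed_seq_def)

lemma complex_subspace_seq_product:
  assumes "\<And>n. seminormed_sequence_space (Y n) (\<rho>s n)"
  shows "complex_subspace (seq_product Y)"
  using seminormed_sequence_space.zero_mem[OF assms] seminormed_sequence_space.add_mem[OF assms]
    seminormed_sequence_space.cscale_mem[OF assms]
  by (simp add: complex_subspace_def seq_product_def)

lemma embed_seq_mem_seq_product:
  assumes "\<And>n. seminormed_sequence_space (Y n) (\<rho>s n)" "y \<in> Y n"
  shows "embed_seq n y \<in> seq_product Y"
  using assms seminormed_sequence_space.zero_mem[OF assms(1)] by (simp add: seq_product_def)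

lemma complex_subspace_diagonal:
  fixes Z :: "('i \<Rightarrow> complex) set"
  assumes Z: "complex_subspace Z"
  shows "complex_subspace ((\<lambda>z. z \<circ> snd) ` Z :: ('j \<times> 'i \<Rightarrow> complex) set)"
  unfolding complex_subspace_def
proof (intro conjI ballI allI)
  have "0 \<circ> snd = 0" by (simp add: fun_eq_iff)
  then show "0 \<in> (\<lambda>z. z \<circ> snd) ` Z" using Z by (metis complex_subspace_def image_eqI)
next
  fix v w :: "'j \<times> 'i \<Rightarrow> complex"
  assume "v \<in> (\<lambda>z. z \<circ> snd) ` Z" "w \<in> (\<lambda>z. z \<circ> snd) ` Z"
  then obtain a b where "a \<in> Z" "b \<in> Z" "v = a \<circ> snd" "w = b \<circ> snd" by blast
  moreover have "(a \<circ> snd) + (b \<circ> snd) = (a + b) \<circ> snd" by (simp add: fun_eq_iff)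
  moreover have "a + b \<in> Z" using Z calculation(1,2) by (simp add: complex_subspace_def)
  ultimately show "v + w \<in> (\<lambda>z. z \<circ> snd) ` Z" by (intro image_eqI[of _ _ "a + b"]) simp_all
next
  fix c and v :: "'j \<times> 'i \<Rightarrow> complex"
  assume "v \<in> (\<lambda>z. z \<circ> snd) ` Z"
  then obtain a where "a \<in> Z" "v = a \<circ> snd" by blast
  moreover have "cscale c (a \<circ> snd) = cscale c a \<circ> snd" by (simp add: fun_eq_iff)
  moreover have "cscale c a \<in> Z" using Z calculation(1) by (simp add: complex_subspace_def)
  ultimately show "cscale c v \<in> (\<lambda>z. z \<circ> snd) ` Z"
    by (intro image_eqI[of _ _ "cscale c a"]) simp_all
qed

lemma seminorm_on_seq_product:
  assumes Y: "\<And>n. seminormed_sequence_space (Y n) (\<rho>s n)" and "0 \<le> C"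
  shows "seminorm_on (seq_product Y) (\<lambda>v. C * (\<Sum>(n, k)\<in>P. \<rho>s n k (curry v n)))"
  unfolding seminorm_on_def
proof (intro conjI ballI allI)
  fix v w assume "v \<in> seq_product Y" "w \<in> seq_product Y"
  then have "(\<Sum>(n, k)\<in>P. \<rho>s n k (curry (v + w) n))
      \<le> (\<Sum>(n, k)\<in>P. \<rho>s n k (curry v n)) + (\<Sum>(n, k)\<in>P. \<rho>s n k (curry w n))"
    unfolding sum.distrib[symmetric]
    by (intro sum_mono) (auto simp: seq_product_def seminormed_sequence_space.seminorm_add[OF Y])
  then show "C * (\<Sum>(n, k)\<in>P. \<rho>s n k (curry (v + w) n))
      \<le> C * (\<Sum>(n, k)\<in>P. \<rho>s n k (curry v n)) + C * (\<Sum>(n, k)\<in>P. \<rho>s n k (curry w n))"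
    using \<open>0 \<le> C\<close> by (simp add: distrib_left[symmetric] mult_left_mono)
next
  fix c v assume "v \<in> seq_product Y"
  then show "C * (\<Sum>(n, k)\<in>P. \<rho>s n k (curry (cscale c v) n))
      = cmod c * (C * (\<Sum>(n, k)\<in>P. \<rho>s n k (curry v n)))"
    by (simp add: seq_product_def seminormed_sequence_space.seminorm_cscale[OF Y]
        sum_distrib_left case_prod_beta mult.left_commute)
qed

lemma bounded_functional_Inter_extend:
  fixes f :: "(nat \<Rightarrow> complex) \<Rightarrow> complex" and P :: "(nat \<times> nat) set"
  assumes Y: "\<And>n. seminormed_sequence_space (Y n) (\<rho>s n)"
    and f: "complex_linear_on (\<Inter>n. Y n) f" and "0 \<le> C"
    and bound: "\<And>z. z \<in> (\<Inter>n. Y n) \<Longrightarrow> cmod (f z) \<le> C * (\<Sum>(n, k)\<in>P. \<rho>s n k z)"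
  obtains F where "complex_linear_on (seq_product Y) F" "\<And>z. z \<in> (\<Inter>n. Y n) \<Longrightarrow> F (z \<circ> snd) = f z"
    and "\<And>v. v \<in> seq_product Y \<Longrightarrow> cmod (F v) \<le> C * (\<Sum>(n, k)\<in>P. \<rho>s n k (curry v n))"
proof -
  interpret Z: seminormed_sequence_space "\<Inter>n. Y n" "inter_seminorms \<rho>s"
    by (rule seminormed_sequence_space_Inter[OF Y])
  define D :: "(nat \<times> nat \<Rightarrow> complex) set" where "D = (\<lambda>z. z \<circ> snd) ` (\<Inter>n. Y n)"
  have D: "complex_subspace D"
    unfolding D_def by (rule complex_subspace_diagonal[OF Z.complex_subspace])
  have "D \<subseteq> seq_product Y" by (auto simp: D_def seq_product_def)
  moreover have "complex_linear_on D (\<lambda>v. f (curry v 0))"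
    using f Z.add_mem Z.cscale_mem by (auto simp: complex_linear_on_def D_def)
  moreover have "\<forall>v\<in>D. cmod (f (curry v 0)) \<le> C * (\<Sum>(n, k)\<in>P. \<rho>s n k (curry v n))"
    using bound by (auto simp: D_def)
  ultimately obtain F where F: "complex_linear_on (seq_product Y) F" "\<forall>v\<in>D. F v = f (curry v 0)"
    "\<forall>v\<in>seq_product Y. cmod (F v) \<le> C * (\<Sum>(n, k)\<in>P. \<rho>s n k (curry v n))"
    by (rule hahn_banach_complex[OF complex_subspace_seq_product[OF Y] D _ _
          seminorm_on_seq_product[OF Y \<open>0 \<le> C\<close>]])
  show ?thesis
  proof (rule that[OF F(1)])
    show "F (z \<circ> snd) = f z" if "z \<in> (\<Inter>n. Y n)" for z
      using F(2) that unfolding D_def by simp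
  qed (use F(3) in blast)
qed

lemma FK_dual_embed_seq:
  assumes Y: "\<And>n. seminormed_sequence_space (Y n) (\<rho>s n)"
    and F: "complex_linear_on (seq_product Y) F" and "finite P" and "0 \<le> C"
    and F_bound: "\<And>v. v \<in> seq_product Y \<Longrightarrow> cmod (F v) \<le> C * (\<Sum>(n, k)\<in>P. \<rho>s n k (curry v n))"
  shows "(\<lambda>y. F (embed_seq n y)) \<in> FK_dual (Y n) (\<rho>s n)"
proof (rule seminormed_sequence_space.bounded_imp_FK_dual[OF Y])
  have embed_mem: "\<And>n y. y \<in> Y n \<Longrightarrow> embed_seq n y \<in> seq_product Y"
    by (rule embed_seq_mem_seq_product[OF Y])
  show "complex_linear_on (Y n) (\<lambda>y. F (embed_seq n y))"
    using F embed_mem seminormed_sequence_space.add_mem[OF Y] seminormed_sequence_space.cscale_mem[OF Y]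
    by (simp add: complex_linear_on_def embed_seq_plus embed_seq_cscale)
  show "finite (snd ` P)" using \<open>finite P\<close> by simp
  fix w assume "w \<in> Y n"
  define S where "S = (\<Sum>k\<in>snd ` P. \<rho>s n k w)"
  \<comment> \<open>only the terms with first index \<open>n\<close> survive in the bound for \<open>embed_seq n w\<close>\<close>
  have "\<rho>s m k (curry (embed_seq n w) m) \<le> S" if "(m, k) \<in> P" for m k
    using that \<open>finite P\<close> seminormed_sequence_space.seminorm_nonneg[OF Y \<open>w \<in> Y n\<close>]
    unfolding S_def
    by (auto simp: seminormed_sequence_space.seminorm_zero[OF Y]
        intro!: member_le_sum sum_nonneg image_eqI[of k snd "(m, k)"])
  then have "(\<Sum>(m, k)\<in>P. \<rho>s m k (curry (embed_seq n w) m)) \<le> card P * S"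
    by (intro sum_bounded_above) auto
  then have "C * (\<Sum>(m, k)\<in>P. \<rho>s m k (curry (embed_seq n w) m)) \<le> C * (card P * S)"
    using \<open>0 \<le> C\<close> by (rule mult_left_mono)
  with F_bound[OF embed_mem[OF \<open>w \<in> Y n\<close>]] show "cmod (F (embed_seq n w)) \<le> (C * card P) * S"
    by (simp add: mult.assoc)
qed

lemma bounded_functional_diagonal_sum:
  assumes Y: "\<And>n. seminormed_sequence_space (Y n) (\<rho>s n)"
    and F: "complex_linear_on (seq_product Y) F"
    and F_bound: "\<And>v. v \<in> seq_product Y \<Longrightarrow> cmod (F v) \<le> C * (\<Sum>(n, k)\<in>P. \<rho>s n k (curry v n))"
    and "finite P" and z: "z \<in> (\<Inter>n. Y n)"
  shows "F (z \<circ> snd) = (\<Sum>n\<in>fst ` P. F (embed_seq n z))"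
proof -
  have W: "complex_subspace (seq_product Y)" by (rule complex_subspace_seq_product[OF Y])
  define v :: "nat set \<Rightarrow> nat \<times> nat \<Rightarrow> complex"
    where "v M = (\<lambda>(m, j). if m \<in> M then z j else 0)" for M
  have curry_v: "curry (v M) n = (if n \<in> M then z else 0)" for M n
    by (auto simp: v_def fun_eq_iff)
  have v_mem: "v M \<in> seq_product Y" for M
    using z by (simp add: seq_product_def curry_v seminormed_sequence_space.zero_mem[OF Y])
  have "F (v M) = (\<Sum>n\<in>M. F (embed_seq n z))" if "finite M" for M
    using that
  proof (induction M rule: finite_induct)
    case empty
    have "v {} = 0" by (simp add: v_def fun_eq_iff)
    then show ?case using complex_linear_on_zero[OF W F] by simp
  next
    case (insert n M)
    have "v (insert n M) = v M + embed_seq n z"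
      using insert.hyps(2) by (auto simp: v_def embed_seq_def fun_eq_iff)
    moreover have "embed_seq n z \<in> seq_product Y"
      using z by (intro embed_seq_mem_seq_product[OF Y]) blast
    ultimately have "F (v (insert n M)) = F (v M) + F (embed_seq n z)"
      using F v_mem unfolding complex_linear_on_def by simp
    then show ?case using insert.IH insert.hyps by simp
  qed
  \<comment> \<open>\<open>z \<circ> snd\<close> and \<open>v (fst ` P)\<close> differ only in rows that the bound for \<open>F\<close> ignores\<close>
  moreover have "F (z \<circ> snd) = F (v (fst ` P))"
  proof -
    have diag: "z \<circ> snd \<in> seq_product Y" using z by (simp add: seq_product_def)
    have "curry ((z \<circ> snd) - v (fst ` P)) n = 0" if "(n, k) \<in> P" for n k
      using that by (force simp: curry_v fun_eq_iff)
    then have "(\<Sum>(n, k)\<in>P. \<rho>s n k (curry ((z \<circ> snd) - v (fst ` P)) n)) = 0"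
      by (intro sum.neutral) (auto simp: seminormed_sequence_space.seminorm_zero[OF Y])
    moreover have "cmod (F ((z \<circ> snd) - v (fst ` P)))
        \<le> C * (\<Sum>(n, k)\<in>P. \<rho>s n k (curry ((z \<circ> snd) - v (fst ` P)) n))"
      by (rule F_bound[OF complex_subspace_diff[OF W diag v_mem]])
    ultimately have "F ((z \<circ> snd) - v (fst ` P)) = 0" by simp
    then show ?thesis using complex_linear_on_diff[OF W F diag v_mem] by simp
  qed
  ultimately show ?thesis using \<open>finite P\<close> by simp
qed

lemma FK_dual_Inter_decompose:
  assumes Y: "\<And>n. seminormed_sequence_space (Y n) (\<rho>s n)"
    and f: "f \<in> FK_dual (\<Inter>n. Y n) (inter_seminorms \<rho>s)"
  obtains N g where "finite N" "\<And>n. g n \<in> FK_dual (Y n) (\<rho>s n)"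
    and "\<And>z. z \<in> (\<Inter>n. Y n) \<Longrightarrow> f z = (\<Sum>n\<in>N. g n z)"
proof -
  interpret Z: seminormed_sequence_space "\<Inter>n. Y n" "inter_seminorms \<rho>s"
    by (rule seminormed_sequence_space_Inter[OF Y])
  obtain K C where "finite K" "0 \<le> C"
    and bound: "\<And>z. z \<in> (\<Inter>n. Y n) \<Longrightarrow> cmod (f z) \<le> C * (\<Sum>m\<in>K. inter_seminorms \<rho>s m z)"
    using Z.FK_dual_bounded[OF f] by blast
  define P where "P = prod_decode ` K"
  have "finite P" using \<open>finite K\<close> by (simp add: P_def)
  obtain F where F: "complex_linear_on (seq_product Y) F"
    and F_diag: "\<And>z. z \<in> (\<Inter>n. Y n) \<Longrightarrow> F (z \<circ> snd) = f z"
    and F_bound: "\<And>v. v \<in> seq_product Y \<Longrightarrow> cmod (F v) \<le> C * (\<Sum>(n, k)\<in>P. \<rho>s n k (curry v n))"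
  proof (rule bounded_functional_Inter_extend[OF Y _ \<open>0 \<le> C\<close>, where f=f and P=P])
    show "complex_linear_on (\<Inter>n. Y n) f" using f by (simp add: FK_dual_iff)
    show "cmod (f z) \<le> C * (\<Sum>(n, k)\<in>P. \<rho>s n k z)" if "z \<in> (\<Inter>n. Y n)" for z
      using bound[OF that] by (simp add: P_def sum_inter_seminorms)
  qed (rule that)
  show ?thesis
  proof (rule that[of "fst ` P" "\<lambda>n y. F (embed_seq n y)"])
    show "finite (fst ` P)" using \<open>finite P\<close> by simp
    show "(\<lambda>y. F (embed_seq n y)) \<in> FK_dual (Y n) (\<rho>s n)" for n
      by (rule FK_dual_embed_seq[OF Y F \<open>finite P\<close> \<open>0 \<le> C\<close> F_bound])
    show "f z = (\<Sum>n\<in>fst ` P. F (embed_seq n z))" if "z \<in> (\<Inter>n. Y n)" for z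
      using F_diag[OF that] bounded_functional_diagonal_sum[OF Y F F_bound \<open>finite P\<close> that]
      by (simp only:)
  qed
qed

section \<open>Deferred Cesaro conullity of the intersection\<close>

lemma Tdc_in_phi: "Tdc p q n x \<in> phi"
proof -
  have Tdc_zero: "Tdc p q n x j = 0" if "q n \<le> j" for j
  proof -
    have "sect x k j = 0" if "k \<in> {p n<..q n}" for k
      using that \<open>q n \<le> j\<close> by (simp add: sect_def)
    then show ?thesis by (simp add: Tdc_def)
  qed
  have "{j. Tdc p q n x j \<noteq> 0} \<subseteq> {..<q n}"
  proof
    fix j assume "j \<in> {j. Tdc p q n x j \<noteq> 0}"
    then show "j \<in> {..<q n}" using Tdc_zero[of j] by (cases "q n \<le> j") auto
  qed
  then show ?thesis unfolding phi_def by (simp add: finite_subset)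
qed

lemma DW_Inter:
  assumes Y: "\<And>n. seminormed_sequence_space (Y n) (\<rho>s n)"
    and x: "\<And>n. x \<in> DW p q (Y n) (\<rho>s n)" and T: "\<And>k. Tdc p q k x \<in> (\<Inter>n. Y n)"
  shows "x \<in> DW p q (\<Inter>n. Y n) (inter_seminorms \<rho>s)"
proof -
  have "x \<in> (\<Inter>n. Y n)" using x by (simp add: DW_def)
  have x_lim: "(\<lambda>k. h (Tdc p q k x)) \<longlonglongrightarrow> h x" if "h \<in> FK_dual (Y n) (\<rho>s n)" for h n
    using x[of n] that by (simp add: DW_def)
  have "(\<lambda>k. f (Tdc p q k x)) \<longlonglongrightarrow> f x" if f_dual: "f \<in> FK_dual (\<Inter>n. Y n) (inter_seminorms \<rho>s)" for f
  proof -
    obtain N g where "finite N" and g: "\<And>n. g n \<in> FK_dual (Y n) (\<rho>s n)"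
      and f: "\<And>z. z \<in> (\<Inter>n. Y n) \<Longrightarrow> f z = (\<Sum>n\<in>N. g n z)"
      using FK_dual_Inter_decompose[OF Y f_dual] by blast
    then have "(\<lambda>k. \<Sum>n\<in>N. g n (Tdc p q k x)) \<longlonglongrightarrow> (\<Sum>n\<in>N. g n x)"
      by (intro tendsto_sum x_lim g)
    then show ?thesis using f T \<open>x \<in> (\<Inter>n. Y n)\<close> by simp
  qed
  with \<open>x \<in> (\<Inter>n. Y n)\<close> show ?thesis by (simp add: DW_def)
qed

theorem mainTheorem4:
  fixes p q :: "nat \<Rightarrow> nat"
    and X :: "(nat \<Rightarrow> complex) set" and \<rho>X :: "nat \<Rightarrow> (nat \<Rightarrow> complex) \<Rightarrow> real"
    and Y :: "nat \<Rightarrow> (nat \<Rightarrow> complex) set" and \<rho>Y :: "nat \<Rightarrow> nat \<Rightarrow> (nat \<Rightarrow> complex) \<Rightarrow> real"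
  assumes "\<And>n. p n < q n"
    and "filterlim q at_top sequentially"
    and "is_FK X \<rho>X"
    and "phi \<subseteq> X"
    and "\<And>n. is_FK (Y n) (\<rho>Y n)"
    and "\<And>n. dc_conull p q X \<rho>X (Y n) (\<rho>Y n)"
  shows "dc_conull p q X \<rho>X (\<Inter>n. Y n) (inter_seminorms \<rho>Y)"
proof -
  have XY: "X \<subseteq> Y n" and DB_DW: "DB p q X \<rho>X \<subseteq> DW p q (Y n) (\<rho>Y n)" for n
    using assms(6)[of n] by (simp_all add: dc_conull_def)
  have T: "Tdc p q k x \<in> (\<Inter>n. Y n)" for k x
    using Tdc_in_phi assms(4) XY by blast
  have "DB p q X \<rho>X \<subseteq> DW p q (\<Inter>n. Y n) (inter_seminorms \<rho>Y)"
  proof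
    fix x assume "x \<in> DB p q X \<rho>X"
    then show "x \<in> DW p q (\<Inter>n. Y n) (inter_seminorms \<rho>Y)"
      using DB_DW by (intro DW_Inter[OF is_FK_imp_seminormed_sequence_space[OF assms(5)] _ T]) blast
  qed
  with assms(3) assms(6)[of 0] is_FK_Inter[OF assms(5)] XY show ?thesis
    by (simp add: dc_conull_def INT_greatest)
qed

end
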